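(* Consider the execution of Greedy Dual on any MPMD or MBPMD instance. At every time $\tau$, the values $(y_S(\tau))_S$ form a feasible solution of the dual program for the requests that have arrived by time $\tau$. That is, $y_S(\tau)\ge 0$ for all $S$, and for every edge $e$ between two requests that have arrived by time $\tau$, $\sum_{S:\,e\in\delta(S)} y_S(\tau)\le\mathrm{cost}(e)$.
   Context: Problem (MPMD / MBPMD). Let $(\mathcal{X},\mathrm{dist})$ be a metric space. An instance consists of $2m$ requests $u_1,\dots,u_{2m}$. Each request $u$ is a triple $(\mathrm{pos}(u),\mathrm{atime}(u),\mathrm{sgn}(u))$, where $\mathrm{pos}(u)\in\mathcal{X}$ is its location and $\mathrm{atime}(u)\ge0$ is its arrival time, with arrival times nondecreasing. In MPMD, $\mathrm{sgn}(u)=0$ for all requests. In MBPMD, exactly $m$ requests have sign $+1$ and $m$ have sign $-1$. At time $\tau$, an algorithm may match two arrived, unmatched requests $u,v$ with $\mathrm{sgn}(u)=-\mathrm{sgn}(v)$, at cost $\mathrm{dist}(\mathrm{pos}(u),\mathrm{pos}(v))$ (connection cost) plus $(\tau-\mathrm{atime}(u))+(\tau-\mathrm{atime}(v))$ (waiting costs). All requests must eventually be matched. Notation. Edges are unordered pairs $\{u,v\}$ of distinct requests with $\mathrm{sgn}(u)=-\mathrm{sgn}(v)$. For a set $S$ of requests, $\delta(S)$ is the set of edges with exactly one endpoint in $S$. In MPMD, $\mathrm{sur}(S)=|S|\bmod 2$; in MBPMD, $\mathrm{sur}(S)=|\sum_{u\in S}\mathrm{sgn}(u)|$. For an edge $e=(u,v)$,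 $\mathrm{cost}(e)=\mathrm{dist}(\mathrm{pos}(u),\mathrm{pos}(v))+|\mathrm{atime}(u)-\mathrm{atime}(v)|$. Algorithm Greedy Dual (GD). GD maintains a dual variable $y_S\ge0$ for every set $S$ of already-arrived requests; $y_S(\tau)$ denotes its value at time $\tau$. It also maintains a partition of the arrived requests into active sets, with $\mathcal{A}(u)$ denoting the active set containing $u$. An active set is growing if it contains at least one free request, and non-growing otherwise. - When a request $u$ arrives, $\mathcal{A}(u)\leftarrow\{u\}$ becomes a new active set, and $y_S\leftarrow 0$ for every new set $S$ containing $u$. - Tight-constraint event: while there is an edge $e=(u,v)$ between arrived requests with $\mathcal{A}(u)\neq\mathcal{A}(v)$ and $\sum_{S:\,e\in\delta(S)}y_S=\mathrm{cost}(e)$, GD does the following. It merges the two sets: $S=\mathcal{A}(u)\cup\mathcal{A}(v)$ becomes active and $\mathcal{A}(w)\leftarrow S$ for all $w\in S$, while $\mathcal{A}(u)$ and $\mathcal{A}(v)$ become inactive. It marks the edge $e$. Then, while there are free $u',v'\in S$ with $\mathrm{sgn}(u')=-\mathrm{sgn}(v')$, it matches $u'$ with $v'$ at the current time. - At all other times, $y_S$ increases continuously at rate $1$ (the same rate as time) for every active growing set $S$; all other dual variables stay constant. *)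

theory Defs
  imports Complex_Main
begin

text \<open>Requests are indexed by natural numbers 0 .. N-1 (N = 2m) in arrival order.
  An instance is given by pos, atime, sg and N.\<close>

definition valid_instance :: "nat \<Rightarrow> (nat \<Rightarrow> real) \<Rightarrow> (nat \<Rightarrow> int) \<Rightarrow> bool" where
  "valid_instance N atime sg \<longleftrightarrow>
     even N \<and>
     (\<forall>i<N. 0 \<le> atime i) \<and>
     (\<forall>i j. i \<le> j \<and> j < N \<longrightarrow> atime i \<le> atime j) \<and>
     ((\<forall>i<N. sg i = 0) \<comment> \<open>MPMD\<close>
      \<or> ((\<forall>i<N. sg i = 1 \<or> sg i = -1) \<and>
          card {i. i < N \<and> sg i = 1} = card {i. i < N \<and> sg i = -1}))" \<comment> \<open>MBPMD\<close>

definition is_edge :: "(nat \<Rightarrow> int) \<Rightarrow> nat \<Rightarrow> nat \<Rightarrow> nat \<Rightarrow> bool" where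
  "is_edge sg N u v \<longleftrightarrow> u < N \<and> v < N \<and> u \<noteq> v \<and> sg u = - sg v"

definition cost :: "(nat \<Rightarrow> 'p::metric_space) \<Rightarrow> (nat \<Rightarrow> real) \<Rightarrow> nat \<Rightarrow> nat \<Rightarrow> real" where
  "cost pos atime u v = dist (pos u) (pos v) + \<bar>atime u - atime v\<bar>"

definition dual_sum :: "(nat set \<Rightarrow> real) \<Rightarrow> nat \<Rightarrow> nat \<Rightarrow> nat \<Rightarrow> real" where
  "dual_sum y k u v = (\<Sum>S \<in> {S. S \<subseteq> {..<k} \<and> ((u \<in> S) \<noteq> (v \<in> S))}. y S)"

text \<open>State of Greedy Dual: current time, number of arrived requests (requests 0..narr-1),
  active-set map, dual variables, current matching (set of matched pairs), marked edges.\<close>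
record gd_state =
  clk :: real
  narr :: nat
  act :: "nat \<Rightarrow> nat set"
  yv :: "nat set \<Rightarrow> real"
  matching :: "nat set set"
  marked :: "nat set set"

definition gd_init :: gd_state where
  "gd_init = \<lparr>clk = 0, narr = 0, act = (\<lambda>_. {}), yv = (\<lambda>_. 0), matching = {}, marked = {}\<rparr>"

definition free_reqs :: "nat \<Rightarrow> nat set set \<Rightarrow> nat set" where
  "free_reqs k M = {..<k} - \<Union>M"

definition active_sets :: "gd_state \<Rightarrow> nat set set" where
  "active_sets st = act st ` {..<narr st}"

definition growing :: "gd_state \<Rightarrow> nat set \<Rightarrow> bool" where
  "growing st S \<longleftrightarrow> (\<exists>w\<in>S. w \<in> free_reqs (narr st) (matching st))"

definition grown :: "gd_state \<Rightarrow> real \<Rightarrow> nat set \<Rightarrow> real" where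
  "grown st t = (\<lambda>S. yv st S + (if S \<in> active_sets st \<and> growing st S then t else 0))"

inductive match_loop :: "(nat \<Rightarrow> int) \<Rightarrow> nat \<Rightarrow> nat set \<Rightarrow> nat set set \<Rightarrow> nat set set \<Rightarrow> bool"
  for sg k S where
  stop: "\<not> (\<exists>a b. a \<in> S \<and> b \<in> S \<and> a \<noteq> b \<and> a \<in> free_reqs k M \<and> b \<in> free_reqs k M
                 \<and> sg a = - sg b) \<Longrightarrow> match_loop sg k S M M"
| step: "a \<in> S \<Longrightarrow> b \<in> S \<Longrightarrow> a \<noteq> b \<Longrightarrow> a \<in> free_reqs k M \<Longrightarrow> b \<in> free_reqs k M \<Longrightarrow>
         sg a = - sg b \<Longrightarrow> match_loop sg k S (insert {a, b} M) M' \<Longrightarrow> match_loop sg k S M M'"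

definition tight_crossing :: "(nat \<Rightarrow> 'p::metric_space) \<Rightarrow> (nat \<Rightarrow> real) \<Rightarrow> (nat \<Rightarrow> int) \<Rightarrow> nat
    \<Rightarrow> gd_state \<Rightarrow> (nat set \<Rightarrow> real) \<Rightarrow> nat \<Rightarrow> nat \<Rightarrow> bool" where
  "tight_crossing pos atime sg N st y u v \<longleftrightarrow>
     u < narr st \<and> v < narr st \<and> is_edge sg N u v \<and> act st u \<noteq> act st v \<and>
     dual_sum y (narr st) u v = cost pos atime u v"

text \<open>One step of Greedy Dual (nondeterministic where the algorithm leaves choices open).\<close>
inductive gd_step :: "(nat \<Rightarrow> 'p::metric_space) \<Rightarrow> (nat \<Rightarrow> real) \<Rightarrow> (nat \<Rightarrow> int) \<Rightarrow> nat
    \<Rightarrow> gd_state \<Rightarrow> gd_state \<Rightarrow> bool"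
  for pos atime sg N where
  arrive: "narr st < N \<Longrightarrow> atime (narr st) = clk st \<Longrightarrow>
     gd_step pos atime sg N st
       (st\<lparr>narr := Suc (narr st), act := (act st)(narr st := {narr st}),
           yv := (\<lambda>S. if narr st \<in> S then 0 else yv st S)\<rparr>)"
| wait: "0 < d \<Longrightarrow> (narr st < N \<longrightarrow> clk st + d \<le> atime (narr st)) \<Longrightarrow>
     (\<forall>t. 0 \<le> t \<and> t < d \<longrightarrow> \<not> (\<exists>u v. tight_crossing pos atime sg N st (grown st t) u v)) \<Longrightarrow>
     gd_step pos atime sg N st (st\<lparr>clk := clk st + d, yv := grown st d\<rparr>)"
| merge: "tight_crossing pos atime sg N st (yv st) u v \<Longrightarrow>
     S = act st u \<union> act st v \<Longrightarrow>
     match_loop sg (narr st) S (matching st) M' \<Longrightarrow>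
     gd_step pos atime sg N st
       (st\<lparr>act := (\<lambda>w. if w \<in> S then S else act st w), marked := insert {u, v} (marked st),
           matching := M'\<rparr>)"

inductive gd_reachable :: "(nat \<Rightarrow> 'p::metric_space) \<Rightarrow> (nat \<Rightarrow> real) \<Rightarrow> (nat \<Rightarrow> int) \<Rightarrow> nat
    \<Rightarrow> gd_state \<Rightarrow> bool"
  for pos atime sg N where
  init: "gd_reachable pos atime sg N gd_init"
| step: "gd_reachable pos atime sg N st \<Longrightarrow> gd_step pos atime sg N st st' \<Longrightarrow>
         gd_reachable pos atime sg N st'"

end

theory Submission
  imports Defs
begin

text \<open>Besides nonnegativity and feasibility, Greedy Dual maintains two facts: the active sets
  partition the arrived requests, and the load of a request w (the total dual of the sets
  containing w) is at most the time w has waited, since w lies in at most one growing active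
  set. On arrival of a request n, the new dual variables vanish, so the dual sum of an edge
  (w, n) is bounded by the load of w, which is at most atime n - atime w \<le> cost w n.
  While time passes, each dual sum is affine in the elapsed time; edges inside an active set
  are crossed by no growing set, and any other edge would become tight before its constraint
  is violated, which stops the waiting phase. Merging changes no dual variable.\<close>

definition load :: "(nat set \<Rightarrow> real) \<Rightarrow> nat \<Rightarrow> nat \<Rightarrow> real" where
  "load y k w = (\<Sum>S\<in>{S. S \<subseteq> {..<k} \<and> w \<in> S}. y S)"

definition dual_feasible :: "(nat \<Rightarrow> 'p::metric_space) \<Rightarrow> (nat \<Rightarrow> real) \<Rightarrow> (nat \<Rightarrow> int) \<Rightarrow> nat
    \<Rightarrow> nat \<Rightarrow> (nat set \<Rightarrow> real) \<Rightarrow> bool" where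
  "dual_feasible pos atime sg N k y \<longleftrightarrow>
     (\<forall>u v. u < k \<and> v < k \<and> is_edge sg N u v \<longrightarrow> dual_sum y k u v \<le> cost pos atime u v)"

definition active_partition :: "gd_state \<Rightarrow> bool" where
  "active_partition st \<longleftrightarrow>
     (\<forall>w<narr st. w \<in> act st w \<and> act st w \<subseteq> {..<narr st}) \<and>
     (\<forall>w<narr st. \<forall>w'<narr st. act st w = act st w' \<or> act st w \<inter> act st w' = {})"

definition gd_invariant :: "(nat \<Rightarrow> 'p::metric_space) \<Rightarrow> (nat \<Rightarrow> real) \<Rightarrow> (nat \<Rightarrow> int) \<Rightarrow> nat
    \<Rightarrow> gd_state \<Rightarrow> bool" where
  "gd_invariant pos atime sg N st \<longleftrightarrow>
     (\<forall>S. 0 \<le> yv st S) \<and> active_partition st \<and>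
     (\<forall>w<narr st. load (yv st) (narr st) w \<le> clk st - atime w) \<and>
     dual_feasible pos atime sg N (narr st) (yv st)"

lemma finite_subsets_lessThan: "finite {S. S \<subseteq> {..<k::nat} \<and> P S}"
  by (rule finite_subset[of _ "Pow {..<k}"]) auto

lemma sum_subsets_Suc_reset:
  "(\<Sum>S\<in>{S. S \<subseteq> {..<Suc n} \<and> P S}. if n \<in> S then 0 else y S)
   = (\<Sum>S\<in>{S. S \<subseteq> {..<n} \<and> P S}. (y S :: real))"
proof -
  have "(\<Sum>S\<in>{S. S \<subseteq> {..<Suc n} \<and> P S}. if n \<in> S then 0 else y S)
      = (\<Sum>S\<in>{S. S \<subseteq> {..<n} \<and> P S}. if n \<in> S then 0 else y S)"
    by (rule sum.mono_neutral_right[OF finite_subsets_lessThan]) (auto simp: less_Suc_eq)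
  also have "\<dots> = (\<Sum>S\<in>{S. S \<subseteq> {..<n} \<and> P S}. y S)"
    by (rule sum.cong) auto
  finally show ?thesis .
qed

lemma load_reset:
  "load (\<lambda>S. if n \<in> S then 0 else y S) (Suc n) w = load y n w"
  unfolding load_def by (rule sum_subsets_Suc_reset)

lemma dual_sum_reset:
  "dual_sum (\<lambda>S. if n \<in> S then 0 else y S) (Suc n) u v = dual_sum y n u v"
  unfolding dual_sum_def by (rule sum_subsets_Suc_reset)

lemma load_beyond: "k \<le> w \<Longrightarrow> load y k w = 0"
  unfolding load_def by (rule sum.neutral) auto

lemma dual_sum_le_load:
  assumes "\<forall>S. 0 \<le> y S"
  shows "dual_sum y k u v \<le> load y k u + load y k v"
proof -
  let ?A = "\<lambda>w. {S. S \<subseteq> {..<k} \<and> w \<in> S}"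
  have "dual_sum y k u v \<le> sum y (?A u \<union> ?A v)"
    unfolding dual_sum_def using assms
    by (intro sum_mono2) (auto intro: finite_subset[OF _ finite_subsets_lessThan])
  also have "\<dots> = sum y (?A u) + sum y (?A v) - sum y (?A u \<inter> ?A v)"
    by (rule sum_Un) (rule finite_subsets_lessThan)+
  also have "\<dots> \<le> sum y (?A u) + sum y (?A v)"
    using assms by (simp add: sum_nonneg)
  finally show ?thesis unfolding load_def .
qed

lemma abs_atime_diff_le_cost: "\<bar>atime u - atime v\<bar> \<le> cost pos atime u v"
  by (simp add: cost_def)

lemma affine_le_if_never_equal:
  fixes D C c d :: real
  assumes "D \<le> C" and "0 \<le> d" and never: "\<And>t. 0 \<le> t \<Longrightarrow> t < d \<Longrightarrow> D + t * c \<noteq> C"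
  shows "D + d * c \<le> C"
proof (rule ccontr)
  assume "\<not> D + d * c \<le> C"
  then have over: "C < D + d * c" by simp
  have "0 < c"
  proof (rule ccontr)
    assume "\<not> 0 < c"
    then have "d * c \<le> 0" using \<open>0 \<le> d\<close> by (simp add: mult_nonneg_nonpos)
    then show False using over \<open>D \<le> C\<close> by linarith
  qed
  define t where "t = (C - D) / c"
  have "0 \<le> t" using \<open>0 < c\<close> \<open>D \<le> C\<close> by (simp add: t_def)
  moreover have "t < d" using \<open>0 < c\<close> over by (simp add: t_def pos_divide_less_eq)
  moreover have "D + t * c = C" using \<open>0 < c\<close> by (simp add: t_def)
  ultimately show False using never by blast
qed

lemma sum_grown:
  assumes "finite A"
  shows "(\<Sum>S\<in>A. grown st t S)
           = (\<Sum>S\<in>A. yv st S) + t * real (card {S\<in>A. S \<in> active_sets st \<and> growing st S})"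
proof -
  have "(\<Sum>S\<in>A. if S \<in> active_sets st \<and> growing st S then t else 0)
        = (\<Sum>S\<in>{S\<in>A. S \<in> active_sets st \<and> growing st S}. t)"
    using sum.inter_filter[OF assms, of "\<lambda>_. t"] by simp
  then show ?thesis unfolding grown_def by (simp add: sum.distrib)
qed

lemma active_set_eq_act:
  assumes "active_partition st" "S \<in> active_sets st" "w < narr st" "w \<in> S"
  shows "S = act st w"
proof -
  obtain w' where "w' < narr st" "S = act st w'"
    using assms(2) unfolding active_sets_def by auto
  with assms show ?thesis unfolding active_partition_def by blast
qed

lemma active_set_not_separating:
  assumes "active_partition st" "S \<in> active_sets st" "u < narr st" "v < narr st"
    and "act st u = act st v"
  shows "u \<in> S \<longleftrightarrow> v \<in> S"
proof
  assume "u \<in> S"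
  then have "S = act st v"
    using active_set_eq_act[OF assms(1,2,3)] assms(5) by simp
  then show "v \<in> S" using assms(1,4) unfolding active_partition_def by simp
next
  assume "v \<in> S"
  then have "S = act st u"
    using active_set_eq_act[OF assms(1,2,4)] assms(5) by simp
  then show "u \<in> S" using assms(1,3) unfolding active_partition_def by simp
qed

lemma load_grown_le:
  assumes "active_partition st" "0 \<le> t" "w < narr st"
  shows "load (grown st t) (narr st) w \<le> load (yv st) (narr st) w + t"
proof -
  let ?A = "{S. S \<subseteq> {..<narr st} \<and> w \<in> S}"
  let ?C = "{S\<in>?A. S \<in> active_sets st \<and> growing st S}"
  have "?C \<subseteq> {act st w}"
    using active_set_eq_act[OF assms(1) _ assms(3)] by auto
  then have "card ?C \<le> 1"
    using card_mono[of "{act st w}" ?C] by simp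
  then have "t * real (card ?C) \<le> t"
    using assms(2) by (simp add: mult_left_le)
  then show ?thesis
    unfolding load_def sum_grown[OF finite_subsets_lessThan] by simp
qed

lemma dual_feasible_grown:
  assumes part: "active_partition st" and feas: "dual_feasible pos atime sg N (narr st) (yv st)"
    and "0 \<le> d"
    and never_tight: "\<forall>t. 0 \<le> t \<and> t < d \<longrightarrow>
                        \<not> (\<exists>u v. tight_crossing pos atime sg N st (grown st t) u v)"
  shows "dual_feasible pos atime sg N (narr st) (grown st d)"
  unfolding dual_feasible_def
proof (intro allI impI)
  fix u v assume uv: "u < narr st \<and> v < narr st \<and> is_edge sg N u v"
  let ?C = "{S\<in>{S. S \<subseteq> {..<narr st} \<and> ((u \<in> S) \<noteq> (v \<in> S))}.
              S \<in> active_sets st \<and> growing st S}"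
  define c where "c = real (card ?C)"
  have affine: "dual_sum (grown st t) (narr st) u v = dual_sum (yv st) (narr st) u v + t * c" for t
    unfolding dual_sum_def c_def by (rule sum_grown[OF finite_subsets_lessThan])
  have start: "dual_sum (yv st) (narr st) u v \<le> cost pos atime u v"
    using feas uv unfolding dual_feasible_def by blast
  show "dual_sum (grown st d) (narr st) u v \<le> cost pos atime u v"
  proof (cases "act st u = act st v")
    case True
    then have "?C = {}"
      using active_set_not_separating[OF part] uv by blast
    then have "c = 0" unfolding c_def by (metis card.empty of_nat_0)
    then show ?thesis using affine[of d] start by simp
  next
    case False
    have "dual_sum (yv st) (narr st) u v + t * c \<noteq> cost pos atime u v"
      if "0 \<le> t" "t < d" for t
    proof
      assume "dual_sum (yv st) (narr st) u v + t * c = cost pos atime u v"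
      then have "tight_crossing pos atime sg N st (grown st t) u v"
        using uv False affine[of t] unfolding tight_crossing_def by simp
      then show False using never_tight that by blast
    qed
    then show ?thesis
      unfolding affine by (rule affine_le_if_never_equal[OF start \<open>0 \<le> d\<close>])
  qed
qed

lemma active_partition_merge:
  assumes part: "active_partition st" "u < narr st" "v < narr st"
    and S: "S = act st u \<union> act st v"
  shows "active_partition
           (st\<lparr>act := (\<lambda>w. if w \<in> S then S else act st w), marked := K, matching := M\<rparr>)"
proof -
  have disjoint: "act st w \<inter> S = {}" if "w < narr st" "w \<notin> S" for w
  proof -
    have "act st w \<noteq> act st u" "act st w \<noteq> act st v"
      using part that S unfolding active_partition_def by auto
    then show ?thesis using part that S unfolding active_partition_def by blast
  qed
  have "S \<subseteq> {..<narr st}" using part S unfolding active_partition_def by auto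
  with part disjoint show ?thesis unfolding active_partition_def by auto
qed

lemma gd_invariant_init: "gd_invariant pos atime sg N gd_init"
  unfolding gd_invariant_def active_partition_def dual_feasible_def gd_init_def by simp

lemma gd_invariant_arrive:
  assumes inv: "gd_invariant pos atime sg N st" and now: "atime (narr st) = clk st"
  shows "gd_invariant pos atime sg N
     (st\<lparr>narr := Suc (narr st), act := (act st)(narr st := {narr st}),
           yv := (\<lambda>S. if narr st \<in> S then 0 else yv st S)\<rparr>)"
proof -
  let ?n = "narr st"
  have nonneg: "\<forall>S. 0 \<le> yv st S" and part: "active_partition st"
    and waited: "\<forall>w<?n. load (yv st) ?n w \<le> clk st - atime w"
    and feas: "dual_feasible pos atime sg N ?n (yv st)"
    using inv unfolding gd_invariant_def by auto
  have new_load: "load (yv st) ?n w \<le> clk st - atime w" if "w < Suc ?n" for w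
    using that waited load_beyond[of ?n w "yv st"] now by (cases "w = ?n") auto
  have "dual_sum (yv st) ?n u v \<le> cost pos atime u v"
    if "u < Suc ?n" "v < Suc ?n" "is_edge sg N u v" for u v
  proof (cases "u < ?n \<and> v < ?n")
    case True
    then show ?thesis using feas that unfolding dual_feasible_def by blast
  next
    case False
    then have "u = ?n \<or> v = ?n" using that by auto
    then have "load (yv st) ?n u + load (yv st) ?n v \<le> \<bar>atime u - atime v\<bar>"
      using new_load[OF that(1)] new_load[OF that(2)] load_beyond[of ?n _ "yv st"] now by auto
    then show ?thesis
      using dual_sum_le_load[OF nonneg, of ?n u v] abs_atime_diff_le_cost[of atime u v pos]
      by linarith
  qed
  moreover have "active_partition (st\<lparr>narr := Suc ?n, act := (act st)(?n := {?n}),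
           yv := (\<lambda>S. if ?n \<in> S then 0 else yv st S)\<rparr>)"
    using part unfolding active_partition_def by (auto simp: less_Suc_eq subset_iff)
  ultimately show ?thesis
    using nonneg new_load
    unfolding gd_invariant_def dual_feasible_def by (auto simp: load_reset dual_sum_reset)
qed

lemma gd_invariant_wait:
  assumes inv: "gd_invariant pos atime sg N st" and "0 < d"
    and "\<forall>t. 0 \<le> t \<and> t < d \<longrightarrow> \<not> (\<exists>u v. tight_crossing pos atime sg N st (grown st t) u v)"
  shows "gd_invariant pos atime sg N (st\<lparr>clk := clk st + d, yv := grown st d\<rparr>)"
proof -
  have nonneg: "\<forall>S. 0 \<le> yv st S" and part: "active_partition st"
    and waited: "\<forall>w<narr st. load (yv st) (narr st) w \<le> clk st - atime w"
    and feas: "dual_feasible pos atime sg N (narr st) (yv st)"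
    using inv unfolding gd_invariant_def by auto
  have "\<forall>S. 0 \<le> grown st d S" using nonneg \<open>0 < d\<close> unfolding grown_def by simp
  moreover have "\<forall>w<narr st. load (grown st d) (narr st) w \<le> clk st + d - atime w"
    using waited load_grown_le[OF part, of d] \<open>0 < d\<close> by fastforce
  moreover have "dual_feasible pos atime sg N (narr st) (grown st d)"
    using dual_feasible_grown[OF part feas] assms(2,3) by simp
  moreover have "active_partition (st\<lparr>clk := clk st + d, yv := grown st d\<rparr>)"
    using part unfolding active_partition_def by simp
  ultimately show ?thesis unfolding gd_invariant_def by simp
qed

lemma gd_invariant_step:
  assumes "gd_step pos atime sg N st st'" "gd_invariant pos atime sg N st"
  shows "gd_invariant pos atime sg N st'"
  using assms
proof (induction rule: gd_step.induct)
  case (arrive st)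
  then show ?case using gd_invariant_arrive by blast
next
  case (wait d st)
  then show ?case using gd_invariant_wait by blast
next
  case (merge st u v S M')
  then have "active_partition st" "u < narr st" "v < narr st"
    unfolding gd_invariant_def tight_crossing_def by auto
  from active_partition_merge[OF this \<open>S = act st u \<union> act st v\<close>,
      where K = "insert {u, v} (marked st)" and M = M'] merge show ?case
    unfolding gd_invariant_def dual_feasible_def by simp
qed

lemma gd_invariant_reachable:
  "gd_reachable pos atime sg N st \<Longrightarrow> gd_invariant pos atime sg N st"
proof (induction rule: gd_reachable.induct)
  case init
  then show ?case by (rule gd_invariant_init)
next
  case (step st st')
  then show ?case using gd_invariant_step by blast
qed

theorem lemma3:
  fixes pos :: "nat \<Rightarrow> 'p::metric_space" and atime :: "nat \<Rightarrow> real"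
    and sg :: "nat \<Rightarrow> int" and N :: nat and st :: gd_state
  assumes "valid_instance N atime sg"
    and "gd_reachable pos atime sg N st"
  shows "(\<forall>S. S \<subseteq> {..<narr st} \<longrightarrow> 0 \<le> yv st S) \<and>
         (\<forall>u v. u < narr st \<and> v < narr st \<and> is_edge sg N u v \<longrightarrow>
                dual_sum (yv st) (narr st) u v \<le> cost pos atime u v)"
  using gd_invariant_reachable[OF assms(2)] unfolding gd_invariant_def dual_feasible_def by blast

end
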